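(* Let $(X,\Sigma)$ be an implicational base with closure operator $\phi$, let $\mathcal{B}^+$ be an antichain of $\mathcal{L}(\Sigma)$, and let $\mathcal{H}=\{X\setminus B\mid B\in\mathcal{B}^+\}$. If $T$ is a transversal of $\mathcal{H}$, then every $T^*\in\mathrm{spex}(T)$ is a transversal of $\mathcal{H}$. In particular, every minimal transversal of $\mathcal{H}$ is independent with respect to $\phi$.
   Context: An implicational base $(X,\Sigma)$ consists of a finite set $X$ and a finite set $\Sigma$ of implications $A\rightarrow b$ with $A\subseteq X$ and $b\in X$. A set $C\subseteq X$ is closed in $\Sigma$ if for every $A\rightarrow b\in\Sigma$, $A\not\subseteq C$ or $b\in C$; $\phi(C)$ denotes the smallest closed set containing $C$. $\mathcal{L}(\Sigma)$ is the lattice of closed sets ordered by inclusion; an antichain of it is a family of pairwise inclusion-incomparable closed sets. A transversal of $\mathcal{H}\subseteq 2^X$ is a set meeting every member of $\mathcal{H}$; minimal means inclusion-minimal. A set $T\subseteq X$ is independent w.r.t. $\phi$ if $x\notin\phi(T\setminus\{x\})$ for every $x\in T$. For $T,I\subseteq X$, $T$ is a generating set of $I$ if $T\subseteq I\subseteq\phi(T)$, and it is minimal if $I\not\subseteq\phi(T\setminus\{x\})$ for all $x\in T$. $\mathrm{spex}(I)$ denotes the set of all minimal generating sets of $I$. *)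

theory Defs
  imports Main
begin

text \<open>An implicational base (X, Sigma): X finite, Sigma a finite set of implications
  A \<rightarrow> b, represented as pairs (A, b), with A \<subseteq> X and b \<in> X.\<close>
definition impl_base :: "'a set \<Rightarrow> ('a set \<times> 'a) set \<Rightarrow> bool" where
  "impl_base X \<Sigma> \<longleftrightarrow> finite X \<and> finite \<Sigma> \<and> (\<forall>(A, b) \<in> \<Sigma>. A \<subseteq> X \<and> b \<in> X)"

definition closed_in_base :: "('a set \<times> 'a) set \<Rightarrow> 'a set \<Rightarrow> bool" where
  "closed_in_base \<Sigma> C \<longleftrightarrow> (\<forall>(A, b) \<in> \<Sigma>. \<not> A \<subseteq> C \<or> b \<in> C)"

definition phi :: "'a set \<Rightarrow> ('a set \<times> 'a) set \<Rightarrow> 'a set \<Rightarrow> 'a set" where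
  "phi X \<Sigma> C = \<Inter> {D. D \<subseteq> X \<and> C \<subseteq> D \<and> closed_in_base \<Sigma> D}"

definition closed_sets :: "'a set \<Rightarrow> ('a set \<times> 'a) set \<Rightarrow> 'a set set" where
  "closed_sets X \<Sigma> = {C. C \<subseteq> X \<and> closed_in_base \<Sigma> C}"

definition antichain_of :: "'a set \<Rightarrow> ('a set \<times> 'a) set \<Rightarrow> 'a set set \<Rightarrow> bool" where
  "antichain_of X \<Sigma> \<B> \<longleftrightarrow> \<B> \<subseteq> closed_sets X \<Sigma> \<and>
     (\<forall>B1 \<in> \<B>. \<forall>B2 \<in> \<B>. B1 \<noteq> B2 \<longrightarrow> \<not> B1 \<subseteq> B2)"

definition transversal :: "'a set \<Rightarrow> 'a set set \<Rightarrow> 'a set \<Rightarrow> bool" where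
  "transversal X \<H> T \<longleftrightarrow> T \<subseteq> X \<and> (\<forall>E \<in> \<H>. T \<inter> E \<noteq> {})"

definition minimal_transversal :: "'a set \<Rightarrow> 'a set set \<Rightarrow> 'a set \<Rightarrow> bool" where
  "minimal_transversal X \<H> T \<longleftrightarrow> transversal X \<H> T \<and>
     (\<forall>T'. T' \<subset> T \<longrightarrow> \<not> transversal X \<H> T')"

definition independent :: "'a set \<Rightarrow> ('a set \<times> 'a) set \<Rightarrow> 'a set \<Rightarrow> bool" where
  "independent X \<Sigma> T \<longleftrightarrow> (\<forall>x \<in> T. x \<notin> phi X \<Sigma> (T - {x}))"

definition min_gen_set :: "'a set \<Rightarrow> ('a set \<times> 'a) set \<Rightarrow> 'a set \<Rightarrow> 'a set \<Rightarrow> bool" where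
  "min_gen_set X \<Sigma> T I \<longleftrightarrow> T \<subseteq> I \<and> I \<subseteq> phi X \<Sigma> T \<and>
     (\<forall>x \<in> T. \<not> I \<subseteq> phi X \<Sigma> (T - {x}))"

definition spex :: "'a set \<Rightarrow> ('a set \<times> 'a) set \<Rightarrow> 'a set \<Rightarrow> 'a set set" where
  "spex X \<Sigma> I = {T. min_gen_set X \<Sigma> T I}"

end

theory Submission
  imports Defs
begin

text \<open>A set meets the complement of a closed set B exactly when it is not contained in B, and
  a set is contained in B exactly when its closure is. Hence whether T is a transversal of the
  complements of an antichain of closed sets depends only on the closure of T. Minimal generating sets of T have the
  closure of T, and a non-independent T has the same closure as some T - {x}.\<close>

lemma subset_phi: "C \<subseteq> phi X \<Sigma> C"
  unfolding phi_def by blast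

lemma phi_subset_closed: "C \<subseteq> B \<Longrightarrow> B \<in> closed_sets X \<Sigma> \<Longrightarrow> phi X \<Sigma> C \<subseteq> B"
  unfolding phi_def closed_sets_def by (rule Inter_lower) auto

lemma transversal_complements_iff:
  "transversal X ((\<lambda>B. X - B) ` \<B>) T \<longleftrightarrow> T \<subseteq> X \<and> (\<forall>B \<in> \<B>. \<not> T \<subseteq> B)"
  unfolding transversal_def by auto

lemma transversal_complements_if_subset_phi:
  assumes "\<B> \<subseteq> closed_sets X \<Sigma>"
    and "transversal X ((\<lambda>B. X - B) ` \<B>) T"
    and "S \<subseteq> X" and "T \<subseteq> phi X \<Sigma> S"
  shows "transversal X ((\<lambda>B. X - B) ` \<B>) S"
  unfolding transversal_complements_iff
proof (intro conjI ballI notI)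
  show "S \<subseteq> X" by fact
  fix B assume "B \<in> \<B>" and "S \<subseteq> B"
  then have "T \<subseteq> B"
    using assms(1,4) phi_subset_closed by blast
  with \<open>B \<in> \<B>\<close> show False
    using assms(2) unfolding transversal_complements_iff by blast
qed

lemma min_gen_set_subset_phi:
  assumes "min_gen_set X \<Sigma> T' T"
  shows "T' \<subseteq> T" and "T \<subseteq> phi X \<Sigma> T'"
  using assms unfolding min_gen_set_def by auto

lemma subset_phi_remove_if_not_independent:
  assumes "x \<in> phi X \<Sigma> (T - {x})"
  shows "T \<subseteq> phi X \<Sigma> (T - {x})"
  using assms subset_phi[of "T - {x}" X \<Sigma>] by blast

lemma independent_if_minimal_transversal_complements:
  assumes "\<B> \<subseteq> closed_sets X \<Sigma>"
    and "minimal_transversal X ((\<lambda>B. X - B) ` \<B>) T"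
  shows "independent X \<Sigma> T"
  unfolding independent_def
proof (intro ballI notI)
  fix x assume "x \<in> T" and "x \<in> phi X \<Sigma> (T - {x})"
  have T: "transversal X ((\<lambda>B. X - B) ` \<B>) T"
    using assms(2) unfolding minimal_transversal_def by blast
  then have "T - {x} \<subseteq> X"
    unfolding transversal_def by blast
  with T have "transversal X ((\<lambda>B. X - B) ` \<B>) (T - {x})"
    using transversal_complements_if_subset_phi assms(1)
      subset_phi_remove_if_not_independent[OF \<open>x \<in> phi X \<Sigma> (T - {x})\<close>] by blast
  moreover have "T - {x} \<subset> T" using \<open>x \<in> T\<close> by blast
  ultimately show False
    using assms(2) unfolding minimal_transversal_def by blast
qed

theorem lemma2:
  fixes X :: "'a set" and \<Sigma> :: "('a set \<times> 'a) set" and \<B> :: "'a set set"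
  assumes "impl_base X \<Sigma>"
    and "antichain_of X \<Sigma> \<B>"
  shows "(\<forall>T. transversal X ((\<lambda>B. X - B) ` \<B>) T \<longrightarrow>
            (\<forall>T' \<in> spex X \<Sigma> T. transversal X ((\<lambda>B. X - B) ` \<B>) T'))
       \<and> (\<forall>T. minimal_transversal X ((\<lambda>B. X - B) ` \<B>) T \<longrightarrow> independent X \<Sigma> T)"
proof (intro conjI allI impI ballI)
  have closed: "\<B> \<subseteq> closed_sets X \<Sigma>"
    using assms(2) unfolding antichain_of_def by blast
  fix T T'
  assume T: "transversal X ((\<lambda>B. X - B) ` \<B>) T" and "T' \<in> spex X \<Sigma> T"
  then have "T' \<subseteq> T" "T \<subseteq> phi X \<Sigma> T'"
    using min_gen_set_subset_phi unfolding spex_def by blast+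
  moreover have "T \<subseteq> X"
    using T unfolding transversal_def by blast
  ultimately show "transversal X ((\<lambda>B. X - B) ` \<B>) T'"
    using transversal_complements_if_subset_phi[OF closed T] by blast
next
  fix T
  assume "minimal_transversal X ((\<lambda>B. X - B) ` \<B>) T"
  then show "independent X \<Sigma> T"
    using independent_if_minimal_transversal_complements assms(2)
    unfolding antichain_of_def by blast
qed

end
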